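(* Let $(G,\mathscr{T})$ be a Hausdorff topological group which is not $g$-reversible. Then there exists a Hausdorff group topology $\mathscr{T}'$ on $G$ such that $w(G,\mathscr{T}')\le nw(G,\mathscr{T})$ and $(G,\mathscr{T}')$ is not $g$-reversible.
   Context: All topological groups are assumed Hausdorff. A topological group $G$ is called $g$-reversible if every continuous automorphism of $G$ (i.e. every continuous group isomorphism of $G$ onto itself) is an open map. $w(X)$ denotes the weight of a space $X$ (minimal cardinality of a base) and $nw(X)$ its network weight (minimal cardinality of a network). *)

theory Defs
  imports "HOL-Analysis.Analysis" "HOL-Algebra.Group"
begin

definition topological_group :: "('a, 'b) monoid_scheme \<Rightarrow> 'a topology \<Rightarrow> bool" where
  "topological_group G T \<longleftrightarrow> group G \<and> topspace T = carrier G \<and>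
     continuous_map (prod_topology T T) T (\<lambda>(x, y). x \<otimes>\<^bsub>G\<^esub> y) \<and>
     continuous_map T T (\<lambda>x. inv\<^bsub>G\<^esub> x)"

definition hausdorff_group_topology :: "('a, 'b) monoid_scheme \<Rightarrow> 'a topology \<Rightarrow> bool" where
  "hausdorff_group_topology G T \<longleftrightarrow> topological_group G T \<and> Hausdorff_space T"

definition g_reversible :: "('a, 'b) monoid_scheme \<Rightarrow> 'a topology \<Rightarrow> bool" where
  "g_reversible G T \<longleftrightarrow>
     (\<forall>f. f \<in> iso G G \<and> continuous_map T T f \<longrightarrow> open_map T T f)"

definition is_base :: "'a topology \<Rightarrow> 'a set set \<Rightarrow> bool" where
  "is_base T B \<longleftrightarrow> (\<forall>V\<in>B. openin T V) \<and>
     (\<forall>U. openin T U \<longrightarrow> (\<exists>\<F>. \<F> \<subseteq> B \<and> \<Union>\<F> = U))"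

definition is_network :: "'a topology \<Rightarrow> 'a set set \<Rightarrow> bool" where
  "is_network T N \<longleftrightarrow> (\<forall>A\<in>N. A \<subseteq> topspace T) \<and>
     (\<forall>U x. openin T U \<and> x \<in> U \<longrightarrow> (\<exists>A\<in>N. x \<in> A \<and> A \<subseteq> U))"

text \<open>w(T') \<le> nw(T): some base of T' has cardinality at most that of every network of T
  (equivalently, at most the minimum cardinality of a network of T).\<close>
definition weight_le_netweight :: "'a topology \<Rightarrow> 'a topology \<Rightarrow> bool" where
  "weight_le_netweight T' T \<longleftrightarrow>
     (\<exists>B. is_base T' B \<and> (\<forall>N. is_network T N \<longrightarrow> (card_of B, card_of N) \<in> ordLeq))"

end

(* Let f be a continuous automorphism of (G, T) that is not open, so that for some open
   neighbourhood U0 of 1 the image f(U0) is not a neighbourhood of 1.  Take a network N of least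
   cardinality; it is infinite, as a finite Hausdorff group is discrete.  Starting from U0 and,
   for each A in N, a neighbourhood of 1 missing A (when one exists), close under finite
   intersections and under choosing, for U and A in N, an open V with V V, V^-1, f(V) and
   a^-1 V a (a in A) all inside U.  Countably many rounds give a family of at most |N| open
   neighbourhoods of 1 satisfying the axioms of a neighbourhood base at 1 of a group topology T'.
   T' is Hausdorff, coarser than T, and makes f continuous; f is not T'-open, since T'-open sets
   are T-open and 1 lies in the T'-interior of U0.  Translating the basic sets by a dense set of
   size at most |N| gives a base of T' of size at most |N|. *)

theory Submission
  imports Defs "HOL-Algebra.Coset"
begin

unbundle cardinal_syntax

lemma finite_topspace_if_finite_network:
  assumes "t0_space X" "is_network X N" "finite N"
  shows "finite (topspace X)"
proof -
  have inj: "inj_on (\<lambda>x. {A \<in> N. x \<in> A}) (topspace X)"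
  proof (rule inj_onI, rule ccontr)
    fix x y assume x: "x \<in> topspace X" and y: "y \<in> topspace X"
      and same: "{A \<in> N. x \<in> A} = {A \<in> N. y \<in> A}" and "x \<noteq> y"
    have sep: False if U: "openin X U" "u \<in> U" "v \<notin> U"
      and eq: "{A \<in> N. u \<in> A} = {A \<in> N. v \<in> A}" for U u v
    proof -
      obtain A where "A \<in> N" "u \<in> A" "A \<subseteq> U"
        using assms(2) U(1,2) unfolding is_network_def by blast
      then have "A \<in> {A \<in> N. u \<in> A}" by simp
      then have "A \<in> {A \<in> N. v \<in> A}" by (simp only: eq)
      then show False using \<open>A \<subseteq> U\<close> U(3) by blast
    qed
    obtain U where U: "openin X U" "x \<notin> U \<longleftrightarrow> y \<in> U"
      using assms(1) x y \<open>x \<noteq> y\<close> unfolding t0_space_def by blast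
    show False
    proof (cases "x \<in> U")
      case True
      with U show False using sep[OF U(1) True _ same] by blast
    next
      case False
      with U show False using sep[OF U(1) _ False same[symmetric]] by blast
    qed
  qed
  have "(\<lambda>x. {A \<in> N. x \<in> A}) ` topspace X \<subseteq> Pow N" by blast
  then have "finite ((\<lambda>x. {A \<in> N. x \<in> A}) ` topspace X)"
    using assms(3) by (simp add: finite_subset)
  from finite_imageD[OF this inj] show ?thesis .
qed

lemma ex_network_of_least_card:
  "\<exists>N0. is_network X N0 \<and> (\<forall>N. is_network X N \<longrightarrow> |N0| \<le>o |N| )"
proof -
  define R where "R = {|N| | N. is_network X N}"
  have "is_network X ((\<lambda>x. {x}) ` topspace X)"
    unfolding is_network_def by (auto dest: openin_subset)
  then have "R \<noteq> {}" unfolding R_def by blast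
  moreover have "\<forall>r\<in>R. Card_order r" unfolding R_def using card_of_Card_order by blast
  ultimately obtain r where "r \<in> R" "\<forall>r'\<in>R. r \<le>o r'"
    using exists_minim_Card_order by blast
  then show ?thesis unfolding R_def by blast
qed

lemma ex_dense_subset_card_le_network:
  assumes "is_network X N"
  shows "\<exists>D \<subseteq> topspace X. |D| \<le>o |N| \<and> (\<forall>S. openin X S \<longrightarrow> S \<noteq> {} \<longrightarrow> S \<inter> D \<noteq> {})"
proof (intro exI conjI allI impI)
  let ?D = "(\<lambda>A. SOME x. x \<in> A) ` {A \<in> N. A \<noteq> {}}"
  have some_mem: "(SOME x. x \<in> A) \<in> A" if "A \<noteq> {}" for A
    using that by (simp add: some_in_eq)
  show "?D \<subseteq> topspace X"
  proof (rule image_subsetI)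
    fix A assume "A \<in> {A \<in> N. A \<noteq> {}}"
    then show "(SOME x. x \<in> A) \<in> topspace X"
      using some_mem[of A] assms unfolding is_network_def by blast
  qed
  show "|?D| \<le>o |N|"
    using card_of_image card_of_mono1[of "{A \<in> N. A \<noteq> {}}" N] ordLeq_transitive by blast
  fix S assume "openin X S" "S \<noteq> {}"
  then obtain A where "A \<in> N" "A \<noteq> {}" "A \<subseteq> S"
    using assms unfolding is_network_def by blast
  then have "(SOME x. x \<in> A) \<in> S" "(SOME x. x \<in> A) \<in> ?D"
    using some_mem[of A] by auto
  then show "S \<inter> ?D \<noteq> {}" by blast
qed

locale top_group =
  fixes G (structure) and T :: "'a topology"
  assumes topological_group: "topological_group G T"

sublocale top_group \<subseteq> group G
  using topological_group by (simp add: topological_group_def)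

context top_group
begin

lemma topspace_eq [simp]: "topspace T = carrier G"
  using topological_group by (simp add: topological_group_def)

lemma continuous_map_mult:
  assumes "continuous_map X T g" "continuous_map X T h"
  shows "continuous_map X T (\<lambda>x. g x \<otimes> h x)"
proof -
  have "continuous_map (prod_topology T T) T (\<lambda>(x, y). x \<otimes> y)"
    using topological_group by (simp add: topological_group_def)
  from continuous_map_compose[OF continuous_map_pairedI[OF assms] this]
  show ?thesis by (simp add: o_def)
qed

lemma continuous_map_inv:
  assumes "continuous_map X T g"
  shows "continuous_map X T (\<lambda>x. inv (g x))"
proof -
  have "continuous_map T T (\<lambda>x. inv x)"
    using topological_group by (simp add: topological_group_def)
  from continuous_map_compose[OF assms this] show ?thesis by (simp add: o_def)
qed

lemma openin_l_coset:
  assumes "openin T U" "x \<in> carrier G"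
  shows "openin T (x <#\<^bsub>G\<^esub> U)"
proof -
  have U: "U \<subseteq> carrier G"
    using openin_subset[OF assms(1)] by simp
  have "continuous_map T T (\<lambda>y. inv x \<otimes> y)"
    using assms(2) by (intro continuous_map_mult continuous_map_id[unfolded id_def]) auto
  from openin_continuous_map_preimage[OF this assms(1)]
  have "openin T {y \<in> topspace T. inv x \<otimes> y \<in> U}" by simp
  moreover have "x <#\<^bsub>G\<^esub> U = {y \<in> topspace T. inv x \<otimes> y \<in> U}"
    using assms(2) U by (force simp: l_coset_def m_assoc[symmetric])
  ultimately show ?thesis by simp
qed

lemma open_map_hom_if_open_at_one:
  assumes hom: "f \<in> hom G G"
    and nhds: "\<And>U. openin T U \<Longrightarrow> \<one> \<in> U \<Longrightarrow> \<exists>W. openin T W \<and> \<one> \<in> W \<and> W \<subseteq> f ` U"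
  shows "open_map T T f"
  unfolding open_map_def
proof (intro allI impI)
  fix S assume S: "openin T S"
  have S_carrier: "S \<subseteq> carrier G"
    using openin_subset[OF S] by simp
  show "openin T (f ` S)"
  proof (subst openin_subopen, intro ballI)
    fix z assume "z \<in> f ` S"
    then obtain x where x: "x \<in> S" "z = f x" by blast
    have xG: "x \<in> carrier G" and fxG: "f x \<in> carrier G"
      using x S_carrier hom by (auto simp: hom_def)
    have "openin T (inv x <#\<^bsub>G\<^esub> S)" "\<one> \<in> inv x <#\<^bsub>G\<^esub> S"
      using openin_l_coset[OF S] xG x(1) by (auto simp: l_coset_def intro!: bexI[of _ x])
    then obtain W where W: "openin T W" "\<one> \<in> W" "W \<subseteq> f ` (inv x <#\<^bsub>G\<^esub> S)"
      using nhds by blast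
    have "f x <#\<^bsub>G\<^esub> W \<subseteq> f ` S"
    proof
      fix t assume "t \<in> f x <#\<^bsub>G\<^esub> W"
      then obtain y where y: "y \<in> S" "t = f x \<otimes> f (inv x \<otimes> y)"
        using W(3) by (auto simp: l_coset_def)
      have "y \<in> carrier G" using y(1) S_carrier by blast
      then have "t = f y"
        using y(2) xG hom_mult[OF hom xG, of "inv x \<otimes> y"] by (simp add: m_assoc[symmetric])
      then show "t \<in> f ` S" using y(1) by blast
    qed
    moreover have "z \<in> f x <#\<^bsub>G\<^esub> W"
      using W(2) x(2) fxG by (force simp: l_coset_def)
    ultimately show "\<exists>W'. openin T W' \<and> z \<in> W' \<and> W' \<subseteq> f ` S"
      using openin_l_coset[OF W(1) fxG] by blast
  qed
qed

lemma open_map_if_finite: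
  assumes "Hausdorff_space T" "finite (carrier G)" "f \<in> carrier G \<rightarrow> carrier G"
  shows "open_map T T f"
proof -
  have "T = discrete_topology (carrier G)"
    using finite_t1_space_imp_discrete_topology[OF topspace_eq assms(2)
        Hausdorff_imp_t1_space[OF assms(1)]] .
  then show ?thesis
    using assms(3) by (auto simp: open_map_def)
qed

lemma exists_conj_mult_inv_nhds:
  assumes "openin T U" "\<one> \<in> U" "y \<in> carrier G"
  shows "\<exists>P V. openin T P \<and> y \<in> P \<and> openin T V \<and> \<one> \<in> V \<and>
    (\<forall>y'\<in>P. \<forall>a\<in>V. inv y' \<otimes> a \<otimes> y' \<in> U \<and> inv a \<in> U \<and> (\<forall>b\<in>V. a \<otimes> b \<in> U))"
proof -
  let ?X = "prod_topology T (prod_topology T T)"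
  have fst: "continuous_map ?X T (\<lambda>p. fst p)"
    and fst_snd: "continuous_map ?X T (\<lambda>p. fst (snd p))"
    and snd_snd: "continuous_map ?X T (\<lambda>p. snd (snd p))"
    using continuous_map_compose[OF continuous_map_snd continuous_map_fst]
      continuous_map_compose[OF continuous_map_snd continuous_map_snd]
    by (auto simp: o_def continuous_map_fst)
  define S where "S = {p \<in> topspace ?X. inv (fst p) \<otimes> fst (snd p) \<otimes> fst p \<in> U}
     \<inter> {p \<in> topspace ?X. inv (fst (snd p)) \<in> U}
     \<inter> {p \<in> topspace ?X. fst (snd p) \<otimes> snd (snd p) \<in> U}"
  have S_open: "openin ?X S"
    unfolding S_def by (intro openin_Int openin_continuous_map_preimage[OF _ assms(1)]
        continuous_map_mult continuous_map_inv fst fst_snd snd_snd)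
  have "(y, \<one>, \<one>) \<in> S"
    using assms unfolding S_def by simp
  then obtain P W where P: "openin T P" "y \<in> P" and W: "openin (prod_topology T T) W"
      "(\<one>, \<one>) \<in> W" and PW: "P \<times> W \<subseteq> S"
    using S_open openin_prod_topology_alt[of T "prod_topology T T" S] by blast
  then obtain V1 V2 where V: "openin T V1" "openin T V2" "\<one> \<in> V1" "\<one> \<in> V2" and "V1 \<times> V2 \<subseteq> W"
    using openin_prod_topology_alt[of T T W] by blast
  with PW have PV: "(y', a, b) \<in> S" if "y' \<in> P" "a \<in> V1 \<inter> V2" "b \<in> V1 \<inter> V2" for y' a b
    using that by blast
  show ?thesis
  proof (intro exI conjI ballI)
    fix y' a assume "y' \<in> P" "a \<in> V1 \<inter> V2"
    then show "inv y' \<otimes> a \<otimes> y' \<in> U" "inv a \<in> U"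
      using PV[of y' a a] unfolding S_def by auto
    show "a \<otimes> b \<in> U" if "b \<in> V1 \<inter> V2" for b
      using PV[OF \<open>y' \<in> P\<close> \<open>a \<in> V1 \<inter> V2\<close> that] unfolding S_def by auto
  qed (use P V in auto)
qed

end

locale identity_nhds_base = group G for G (structure) +
  fixes \<U> :: "'a set set"
  assumes nhds_subset_carrier: "U \<in> \<U> \<Longrightarrow> U \<subseteq> carrier G"
    and one_mem_nhds: "U \<in> \<U> \<Longrightarrow> \<one> \<in> U"
    and nhds_nonempty: "\<U> \<noteq> {}"
    and nhds_Int: "U \<in> \<U> \<Longrightarrow> V \<in> \<U> \<Longrightarrow> U \<inter> V \<in> \<U>"
    and nhds_mult: "U \<in> \<U> \<Longrightarrow> \<exists>V\<in>\<U>. \<forall>a\<in>V. \<forall>b\<in>V. a \<otimes> b \<in> U"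
    and nhds_inv: "U \<in> \<U> \<Longrightarrow> \<exists>V\<in>\<U>. \<forall>a\<in>V. inv a \<in> U"
    and nhds_conj: "U \<in> \<U> \<Longrightarrow> y \<in> carrier G \<Longrightarrow> \<exists>V\<in>\<U>. \<forall>a\<in>V. inv y \<otimes> a \<otimes> y \<in> U"
begin

lemma nhds_div:
  assumes "U \<in> \<U>"
  shows "\<exists>V\<in>\<U>. \<forall>a\<in>V. \<forall>b\<in>V. inv a \<otimes> b \<in> U \<and> a \<otimes> inv b \<in> U"
proof -
  obtain V1 where V1: "V1 \<in> \<U>" "\<forall>a\<in>V1. \<forall>b\<in>V1. a \<otimes> b \<in> U"
    using nhds_mult[OF assms] by blast
  obtain V2 where V2: "V2 \<in> \<U>" "\<forall>a\<in>V2. inv a \<in> V1"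
    using nhds_inv[OF V1(1)] by blast
  have "V1 \<inter> V2 \<in> \<U>" using V1(1) V2(1) by (rule nhds_Int)
  moreover have "\<forall>a\<in>V1 \<inter> V2. \<forall>b\<in>V1 \<inter> V2. inv a \<otimes> b \<in> U \<and> a \<otimes> inv b \<in> U"
    using V1(2) V2(2) by blast
  ultimately show ?thesis by blast
qed

lemma mem_l_coset_self: "x \<in> carrier G \<Longrightarrow> U \<in> \<U> \<Longrightarrow> x \<in> x <#\<^bsub>G\<^esub> U"
  using one_mem_nhds by (force simp: l_coset_def)

lemma l_coset_mult_subset:
  assumes "x \<in> carrier G" "a \<in> carrier G" "V \<in> \<U>" "\<forall>b\<in>V. a \<otimes> b \<in> U"
  shows "(x \<otimes> a) <#\<^bsub>G\<^esub> V \<subseteq> x <#\<^bsub>G\<^esub> U"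
  using assms nhds_subset_carrier[OF assms(3)] by (force simp: l_coset_def m_assoc)

definition nhds_topology :: "'a topology" where
  "nhds_topology = topology (\<lambda>W. W \<subseteq> carrier G \<and> (\<forall>x\<in>W. \<exists>U\<in>\<U>. x <#\<^bsub>G\<^esub> U \<subseteq> W))"

lemma openin_nhds_topology:
  "openin nhds_topology W \<longleftrightarrow> W \<subseteq> carrier G \<and> (\<forall>x\<in>W. \<exists>U\<in>\<U>. x <#\<^bsub>G\<^esub> U \<subseteq> W)"
proof -
  have "istopology (\<lambda>W. W \<subseteq> carrier G \<and> (\<forall>x\<in>W. \<exists>U\<in>\<U>. x <#\<^bsub>G\<^esub> U \<subseteq> W))"
    unfolding istopology_def
  proof (rule conjI; intro allI impI)
    fix S S'
    assume S: "S \<subseteq> carrier G \<and> (\<forall>x\<in>S. \<exists>U\<in>\<U>. x <#\<^bsub>G\<^esub> U \<subseteq> S)"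
      and S': "S' \<subseteq> carrier G \<and> (\<forall>x\<in>S'. \<exists>U\<in>\<U>. x <#\<^bsub>G\<^esub> U \<subseteq> S')"
    show "S \<inter> S' \<subseteq> carrier G \<and> (\<forall>x\<in>S \<inter> S'. \<exists>U\<in>\<U>. x <#\<^bsub>G\<^esub> U \<subseteq> S \<inter> S')"
    proof (intro conjI ballI)
      show "S \<inter> S' \<subseteq> carrier G" using S by blast
      fix x assume "x \<in> S \<inter> S'"
      then obtain U U' where "U \<in> \<U>" "x <#\<^bsub>G\<^esub> U \<subseteq> S" "U' \<in> \<U>" "x <#\<^bsub>G\<^esub> U' \<subseteq> S'"
        using S S' by blast
      moreover have "x <#\<^bsub>G\<^esub> (U \<inter> U') \<subseteq> (x <#\<^bsub>G\<^esub> U) \<inter> (x <#\<^bsub>G\<^esub> U')"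
        by (auto simp: l_coset_def)
      ultimately show "\<exists>U\<in>\<U>. x <#\<^bsub>G\<^esub> U \<subseteq> S \<inter> S'"
        using nhds_Int by blast
    qed
  next
    fix K assume K: "\<forall>S\<in>K. S \<subseteq> carrier G \<and> (\<forall>x\<in>S. \<exists>U\<in>\<U>. x <#\<^bsub>G\<^esub> U \<subseteq> S)"
    show "\<Union>K \<subseteq> carrier G \<and> (\<forall>x\<in>\<Union>K. \<exists>U\<in>\<U>. x <#\<^bsub>G\<^esub> U \<subseteq> \<Union>K)"
    proof (intro conjI ballI)
      show "\<Union>K \<subseteq> carrier G" using K by blast
      fix x assume "x \<in> \<Union>K"
      then obtain S where "S \<in> K" "x \<in> S" by blast
      then obtain U where "U \<in> \<U>" "x <#\<^bsub>G\<^esub> U \<subseteq> S" using K by blast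
      then show "\<exists>U\<in>\<U>. x <#\<^bsub>G\<^esub> U \<subseteq> \<Union>K" using \<open>S \<in> K\<close> by blast
    qed
  qed
  then show ?thesis
    unfolding nhds_topology_def by simp
qed

lemma topspace_nhds_topology [simp]: "topspace nhds_topology = carrier G"
proof
  show "topspace nhds_topology \<subseteq> carrier G"
    using openin_nhds_topology[of "topspace nhds_topology"] by simp
  obtain U where U: "U \<in> \<U>" using nhds_nonempty by blast
  have "x <#\<^bsub>G\<^esub> U \<subseteq> carrier G" if "x \<in> carrier G" for x
    using l_coset_subset_G[OF nhds_subset_carrier[OF U] that] .
  then have "openin nhds_topology (carrier G)"
    unfolding openin_nhds_topology using U by blast
  then show "carrier G \<subseteq> topspace nhds_topology"
    by (rule openin_subset)
qed

lemma mem_interior_l_coset: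
  assumes "x \<in> carrier G" "U \<in> \<U>"
  shows "x \<in> nhds_topology interior_of (x <#\<^bsub>G\<^esub> U)"
proof -
  define I where "I = {z \<in> carrier G. \<exists>V\<in>\<U>. z <#\<^bsub>G\<^esub> V \<subseteq> x <#\<^bsub>G\<^esub> U}"
  have "openin nhds_topology I"
    unfolding openin_nhds_topology
  proof (intro conjI ballI)
    show "I \<subseteq> carrier G" unfolding I_def by blast
    fix z assume "z \<in> I"
    then obtain V where z: "z \<in> carrier G" and V: "V \<in> \<U>" "z <#\<^bsub>G\<^esub> V \<subseteq> x <#\<^bsub>G\<^esub> U"
      unfolding I_def by blast
    obtain V' where V': "V' \<in> \<U>" "\<forall>a\<in>V'. \<forall>b\<in>V'. a \<otimes> b \<in> V"
      using nhds_mult[OF V(1)] by blast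
    have "z <#\<^bsub>G\<^esub> V' \<subseteq> I"
    proof
      fix w assume "w \<in> z <#\<^bsub>G\<^esub> V'"
      then obtain a where a: "a \<in> V'" "w = z \<otimes> a"
        unfolding l_coset_def by blast
      have aG: "a \<in> carrier G"
        using a(1) nhds_subset_carrier[OF V'(1)] by blast
      have "w <#\<^bsub>G\<^esub> V' \<subseteq> z <#\<^bsub>G\<^esub> V"
        using l_coset_mult_subset[OF z aG V'(1)] V'(2) a by simp
      then show "w \<in> I"
        unfolding I_def using V(2) V'(1) a(2) z aG by blast
    qed
    then show "\<exists>V\<in>\<U>. z <#\<^bsub>G\<^esub> V \<subseteq> I" using V'(1) by blast
  qed
  moreover have "I \<subseteq> x <#\<^bsub>G\<^esub> U"
    unfolding I_def using mem_l_coset_self by blast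
  moreover have "x \<in> I"
    unfolding I_def using assms by blast
  ultimately show ?thesis
    using interior_of_maximal by blast
qed

lemma continuous_map_into_nhds_topologyI:
  assumes "g \<in> topspace X \<rightarrow> carrier G"
    and "\<And>x U. x \<in> topspace X \<Longrightarrow> U \<in> \<U> \<Longrightarrow> \<exists>S. openin X S \<and> x \<in> S \<and> g ` S \<subseteq> g x <#\<^bsub>G\<^esub> U"
  shows "continuous_map X nhds_topology g"
  unfolding continuous_map_def
proof (intro conjI allI impI)
  show "g \<in> topspace X \<rightarrow> topspace nhds_topology"
    using assms(1) by simp
  fix W assume W: "openin nhds_topology W"
  show "openin X {x \<in> topspace X. g x \<in> W}"
  proof (subst openin_subopen, intro ballI)
    fix x assume x: "x \<in> {x \<in> topspace X. g x \<in> W}"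
    then obtain U where U: "U \<in> \<U>" "g x <#\<^bsub>G\<^esub> U \<subseteq> W"
      using W unfolding openin_nhds_topology by blast
    from x have "x \<in> topspace X" by simp
    from assms(2)[OF this U(1)]
    obtain S where S: "openin X S" "x \<in> S" "g ` S \<subseteq> g x <#\<^bsub>G\<^esub> U" by blast
    then have "S \<subseteq> {x \<in> topspace X. g x \<in> W}"
      using U(2) openin_subset[OF S(1)] by blast
    then show "\<exists>S. openin X S \<and> x \<in> S \<and> S \<subseteq> {x \<in> topspace X. g x \<in> W}"
      using S(1,2) by blast
  qed
qed

lemma continuous_map_nhds_mult:
  "continuous_map (prod_topology nhds_topology nhds_topology) nhds_topology (\<lambda>(x, y). x \<otimes> y)"
proof (rule continuous_map_into_nhds_topologyI)
  show "(\<lambda>(x, y). x \<otimes> y) \<in> topspace (prod_topology nhds_topology nhds_topology) \<rightarrow> carrier G"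
    by auto
  fix p U assume p: "p \<in> topspace (prod_topology nhds_topology nhds_topology)" and U: "U \<in> \<U>"
  obtain x y where xy: "p = (x, y)" "x \<in> carrier G" "y \<in> carrier G"
    using p by auto
  obtain V1 where V1: "V1 \<in> \<U>" "\<forall>a\<in>V1. \<forall>b\<in>V1. a \<otimes> b \<in> U"
    using nhds_mult[OF U] by blast
  obtain V2 where V2: "V2 \<in> \<U>" "\<forall>a\<in>V2. inv y \<otimes> a \<otimes> y \<in> V1"
    using nhds_conj[OF V1(1) xy(3)] by blast
  define V where "V = V1 \<inter> V2"
  have V: "V \<in> \<U>"
    unfolding V_def using V1(1) V2(1) by (rule nhds_Int)
  define S where "S = (nhds_topology interior_of (x <#\<^bsub>G\<^esub> V)) \<times> (nhds_topology interior_of (y <#\<^bsub>G\<^esub> V))"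
  have "openin (prod_topology nhds_topology nhds_topology) S"
    unfolding S_def by (simp add: openin_prod_Times_iff)
  moreover have "p \<in> S"
    unfolding S_def xy(1) using mem_interior_l_coset xy(2,3) V by blast
  moreover have "(\<lambda>(x, y). x \<otimes> y) ` S \<subseteq> (x \<otimes> y) <#\<^bsub>G\<^esub> U"
  proof (rule image_subsetI, clarify)
    fix x' y' assume "(x', y') \<in> S"
    then have "x' \<in> nhds_topology interior_of (x <#\<^bsub>G\<^esub> V)"
      and "y' \<in> nhds_topology interior_of (y <#\<^bsub>G\<^esub> V)"
      unfolding S_def by simp_all
    then have "x' \<in> x <#\<^bsub>G\<^esub> V" "y' \<in> y <#\<^bsub>G\<^esub> V"
      using interior_of_subset by (meson subsetD)+
    then obtain a b where ab: "a \<in> V" "b \<in> V" "x' = x \<otimes> a" "y' = y \<otimes> b"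
      unfolding l_coset_def by blast
    have abG: "a \<in> carrier G" "b \<in> carrier G"
      using ab(1,2) nhds_subset_carrier[OF V] by blast+
    have "x' \<otimes> y' = x \<otimes> y \<otimes> (inv y \<otimes> a \<otimes> y \<otimes> b)"
      unfolding ab(3,4) using xy(2,3) abG by (simp add: m_assoc) (simp add: m_assoc[symmetric])
    moreover have "inv y \<otimes> a \<otimes> y \<otimes> b \<in> U"
      using V1(2) V2(2) ab(1,2) unfolding V_def by blast
    ultimately show "x' \<otimes> y' \<in> (x \<otimes> y) <#\<^bsub>G\<^esub> U"
      unfolding l_coset_def by blast
  qed
  ultimately show "\<exists>S. openin (prod_topology nhds_topology nhds_topology) S \<and> p \<in> S \<and>
      (\<lambda>(x, y). x \<otimes> y) ` S \<subseteq> (case p of (x, y) \<Rightarrow> x \<otimes> y) <#\<^bsub>G\<^esub> U"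
    unfolding xy(1) by (intro exI[of _ S]) simp
qed

lemma continuous_map_nhds_inv: "continuous_map nhds_topology nhds_topology (\<lambda>x. inv x)"
proof (rule continuous_map_into_nhds_topologyI)
  fix x U assume x: "x \<in> topspace nhds_topology" and U: "U \<in> \<U>"
  then have xG: "x \<in> carrier G" by simp
  obtain V1 where V1: "V1 \<in> \<U>" "\<forall>c\<in>V1. x \<otimes> c \<otimes> inv x \<in> U"
    using nhds_conj[OF U inv_closed[OF xG]] xG by auto
  obtain V where V: "V \<in> \<U>" "\<forall>a\<in>V. inv a \<in> V1"
    using nhds_inv[OF V1(1)] by blast
  have "(\<lambda>x. inv x) ` (x <#\<^bsub>G\<^esub> V) \<subseteq> inv x <#\<^bsub>G\<^esub> U"
  proof (rule image_subsetI)
    fix x' assume "x' \<in> x <#\<^bsub>G\<^esub> V"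
    then obtain a where a: "a \<in> V" "x' = x \<otimes> a"
      unfolding l_coset_def by blast
    have aG: "a \<in> carrier G"
      using a(1) nhds_subset_carrier[OF V(1)] by blast
    have "inv x' = inv x \<otimes> (x \<otimes> inv a \<otimes> inv x)"
      unfolding a(2) using xG aG by (simp add: m_assoc[symmetric] inv_mult_group)
    moreover have "x \<otimes> inv a \<otimes> inv x \<in> U"
      using V1(2) V(2) a(1) by blast
    ultimately show "inv x' \<in> inv x <#\<^bsub>G\<^esub> U"
      unfolding l_coset_def by blast
  qed
  then have "(\<lambda>x. inv x) ` (nhds_topology interior_of (x <#\<^bsub>G\<^esub> V)) \<subseteq> inv x <#\<^bsub>G\<^esub> U"
    using image_mono[OF interior_of_subset] by (rule order_trans[rotated])
  then show "\<exists>S. openin nhds_topology S \<and> x \<in> S \<and> (\<lambda>x. inv x) ` S \<subseteq> inv x <#\<^bsub>G\<^esub> U"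
    using mem_interior_l_coset[OF xG V(1)] openin_interior_of by blast
qed auto

lemma continuous_map_nhds_hom:
  assumes hom: "f \<in> hom G G" and small: "\<And>U. U \<in> \<U> \<Longrightarrow> \<exists>V\<in>\<U>. f ` V \<subseteq> U"
  shows "continuous_map nhds_topology nhds_topology f"
proof (rule continuous_map_into_nhds_topologyI)
  show "f \<in> topspace nhds_topology \<rightarrow> carrier G"
    using hom by (auto simp: hom_def)
  fix x U assume x: "x \<in> topspace nhds_topology" and U: "U \<in> \<U>"
  then have xG: "x \<in> carrier G" by simp
  obtain V where V: "V \<in> \<U>" "f ` V \<subseteq> U"
    using small[OF U] by blast
  have "f ` (x <#\<^bsub>G\<^esub> V) \<subseteq> f x <#\<^bsub>G\<^esub> U"
  proof (rule image_subsetI)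
    fix x' assume "x' \<in> x <#\<^bsub>G\<^esub> V"
    then obtain a where a: "a \<in> V" "x' = x \<otimes> a"
      unfolding l_coset_def by blast
    have "a \<in> carrier G"
      using a(1) nhds_subset_carrier[OF V(1)] by blast
    then have "f x' = f x \<otimes> f a"
      unfolding a(2) using hom_mult[OF hom xG] by blast
    then show "f x' \<in> f x <#\<^bsub>G\<^esub> U"
      using V(2) a(1) unfolding l_coset_def by blast
  qed
  then have "f ` (nhds_topology interior_of (x <#\<^bsub>G\<^esub> V)) \<subseteq> f x <#\<^bsub>G\<^esub> U"
    using image_mono[OF interior_of_subset] by (rule order_trans[rotated])
  then show "\<exists>S. openin nhds_topology S \<and> x \<in> S \<and> f ` S \<subseteq> f x <#\<^bsub>G\<^esub> U"
    using mem_interior_l_coset[OF xG V(1)] openin_interior_of by blast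
qed

lemma topological_group_nhds_topology: "topological_group G nhds_topology"
  unfolding topological_group_def
  using is_group continuous_map_nhds_mult continuous_map_nhds_inv by simp

lemma Hausdorff_nhds_topology:
  assumes separating: "\<And>z. z \<in> carrier G \<Longrightarrow> z \<noteq> \<one> \<Longrightarrow> \<exists>U\<in>\<U>. z \<notin> U"
  shows "Hausdorff_space nhds_topology"
  unfolding Hausdorff_space_def topspace_nhds_topology
proof (intro allI impI, elim conjE)
  fix x y assume x: "x \<in> carrier G" and y: "y \<in> carrier G" and "x \<noteq> y"
  have "inv x \<otimes> y \<noteq> \<one>"
  proof
    assume "inv x \<otimes> y = \<one>"
    then have "x \<otimes> (inv x \<otimes> y) = x" using x by simp
    then show False using x y \<open>x \<noteq> y\<close> by (simp add: m_assoc[symmetric])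
  qed
  then obtain U where U: "U \<in> \<U>" "inv x \<otimes> y \<notin> U"
    using separating x y by blast
  obtain V where V: "V \<in> \<U>" "\<forall>a\<in>V. \<forall>b\<in>V. inv a \<otimes> b \<in> U \<and> a \<otimes> inv b \<in> U"
    using nhds_div[OF U(1)] by blast
  have "disjnt (x <#\<^bsub>G\<^esub> V) (y <#\<^bsub>G\<^esub> V)"
  proof (rule ccontr)
    assume "\<not> disjnt (x <#\<^bsub>G\<^esub> V) (y <#\<^bsub>G\<^esub> V)"
    then obtain a b where ab: "a \<in> V" "b \<in> V" and eq: "x \<otimes> a = y \<otimes> b"
      unfolding disjnt_def l_coset_def by blast
    have abG: "a \<in> carrier G" "b \<in> carrier G"
      using ab nhds_subset_carrier[OF V(1)] by auto
    have "inv x \<otimes> y = inv x \<otimes> (y \<otimes> b) \<otimes> inv b"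
      using x y abG by (simp add: m_assoc)
    also have "\<dots> = inv x \<otimes> (x \<otimes> a) \<otimes> inv b"
      by (simp only: eq)
    also have "\<dots> = a \<otimes> inv b"
      using x abG by (simp add: m_assoc[symmetric])
    finally show False
      using U(2) V(2) ab by auto
  qed
  then have "disjnt (nhds_topology interior_of (x <#\<^bsub>G\<^esub> V)) (nhds_topology interior_of (y <#\<^bsub>G\<^esub> V))"
    using interior_of_subset disjnt_subset1 disjnt_subset2 by metis
  then show "\<exists>U V. openin nhds_topology U \<and> openin nhds_topology V \<and> x \<in> U \<and> y \<in> V \<and> disjnt U V"
    using mem_interior_l_coset[OF x V(1)] mem_interior_l_coset[OF y V(1)] openin_interior_of
    by blast
qed

lemma is_base_nhds_topology:
  assumes D: "D \<subseteq> carrier G"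
    and dense: "\<And>W. openin nhds_topology W \<Longrightarrow> W \<noteq> {} \<Longrightarrow> W \<inter> D \<noteq> {}"
  shows "is_base nhds_topology ((\<lambda>(d, V). nhds_topology interior_of (d <#\<^bsub>G\<^esub> V)) ` (D \<times> \<U>))"
    (is "is_base _ ?B")
  unfolding is_base_def
proof (intro conjI ballI allI impI)
  show "openin nhds_topology B" if "B \<in> ?B" for B
    using that by auto
  fix W assume W: "openin nhds_topology W"
  have cover: "\<exists>B\<in>?B. x \<in> B \<and> B \<subseteq> W" if x: "x \<in> W" for x
  proof -
    have xG: "x \<in> carrier G"
      using W x unfolding openin_nhds_topology by blast
    obtain U where U: "U \<in> \<U>" "x <#\<^bsub>G\<^esub> U \<subseteq> W"
      using W x unfolding openin_nhds_topology by blast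
    obtain V where V: "V \<in> \<U>" "\<forall>a\<in>V. \<forall>b\<in>V. a \<otimes> b \<in> U"
      using nhds_mult[OF U(1)] by blast
    obtain V' where V': "V' \<in> \<U>" "\<forall>a\<in>V'. \<forall>b\<in>V'. inv a \<otimes> b \<in> V"
      using nhds_div[OF V(1)] by blast
    have "nhds_topology interior_of (x <#\<^bsub>G\<^esub> V') \<inter> D \<noteq> {}"
      using dense[OF openin_interior_of] mem_interior_l_coset[OF xG V'(1)] by blast
    then obtain d where d: "d \<in> D" "d \<in> x <#\<^bsub>G\<^esub> V'"
      using interior_of_subset[of nhds_topology "x <#\<^bsub>G\<^esub> V'"] by blast
    then obtain v where v: "v \<in> V'" "d = x \<otimes> v"
      unfolding l_coset_def by blast
    have vG: "v \<in> carrier G"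
      using v(1) nhds_subset_carrier[OF V'(1)] by blast
    have "inv \<one> \<otimes> v \<in> V"
      using V'(2) v(1) one_mem_nhds[OF V'(1)] by blast
    then have "v \<in> V"
      using vG by simp
    have "x <#\<^bsub>G\<^esub> V' \<subseteq> d <#\<^bsub>G\<^esub> V"
      using l_coset_mult_subset[of d "inv v" V' V] V'(1,2) v xG vG
      by (simp add: m_assoc)
    then have "x \<in> nhds_topology interior_of (d <#\<^bsub>G\<^esub> V)"
      using interior_of_mono[of _ _ nhds_topology] mem_interior_l_coset[OF xG V'(1)] by blast
    moreover have "\<forall>b\<in>V. v \<otimes> b \<in> U"
      using V(2) \<open>v \<in> V\<close> by blast
    then have "d <#\<^bsub>G\<^esub> V \<subseteq> x <#\<^bsub>G\<^esub> U"
      unfolding v(2) by (rule l_coset_mult_subset[OF xG vG V(1)])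
    then have "nhds_topology interior_of (d <#\<^bsub>G\<^esub> V) \<subseteq> W"
      using order_trans[OF interior_of_subset order_trans[OF _ U(2)]] by blast
    moreover have "nhds_topology interior_of (d <#\<^bsub>G\<^esub> V) \<in> ?B"
      using d(1) V(1) by (intro rev_image_eqI[of "(d, V)"]) auto
    ultimately show ?thesis
      by (intro bexI[of _ "nhds_topology interior_of (d <#\<^bsub>G\<^esub> V)"] conjI)
  qed
  have "\<Union>{B \<in> ?B. B \<subseteq> W} = W"
  proof
    show "W \<subseteq> \<Union>{B \<in> ?B. B \<subseteq> W}"
      using cover by blast
  qed blast
  then show "\<exists>\<F>\<subseteq>?B. \<Union>\<F> = W"
    by (intro exI[of _ "{B \<in> ?B. B \<subseteq> W}"]) auto
qed

end

locale network_refinement = top_group +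
  fixes N :: "'a set set" and f :: "'a \<Rightarrow> 'a" and U0 :: "'a set"
  assumes Hausdorff: "Hausdorff_space T"
    and network: "is_network T N" and infinite_network: "infinite N"
    and f_hom: "f \<in> hom G G" and f_continuous: "continuous_map T T f"
    and U0_open: "openin T U0" and one_mem_U0: "\<one> \<in> U0"
begin

text \<open>A single choice of \<open>V\<close> serves all conjugations by points of a network element \<open>A\<close>;
  as the network covers \<open>carrier G\<close>, this yields the conjugation axiom of
  \<open>identity_nhds_base\<close> with at most \<open>|N|\<close> choices per set \<open>U\<close>.\<close>
definition refines_along :: "'a set \<Rightarrow> 'a set \<Rightarrow> 'a set \<Rightarrow> bool" where
  "refines_along A U V \<longleftrightarrow> openin T V \<and> \<one> \<in> V \<and>
     (\<forall>y\<in>A. \<forall>a\<in>V. inv y \<otimes> a \<otimes> y \<in> U \<and> inv a \<in> U \<and> f a \<in> U \<and> (\<forall>b\<in>V. a \<otimes> b \<in> U))"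

definition refinement :: "'a set \<Rightarrow> 'a set \<Rightarrow> 'a set" where
  "refinement A U = (if \<exists>V. refines_along A U V then SOME V. refines_along A U V else U)"

definition avoiding :: "'a set \<Rightarrow> 'a set" where
  "avoiding A = (if \<exists>V. openin T V \<and> \<one> \<in> V \<and> V \<inter> A = {}
     then SOME V. openin T V \<and> \<one> \<in> V \<and> V \<inter> A = {} else carrier G)"

definition refinement_step :: "'a set set \<Rightarrow> 'a set set" where
  "refinement_step \<F> = \<F> \<union> (\<lambda>(U, V). U \<inter> V) ` (\<F> \<times> \<F>) \<union> (\<lambda>(A, U). refinement A U) ` (N \<times> \<F>)"

definition nhds_family :: "'a set set" where
  "nhds_family = (\<Union>n. (refinement_step ^^ n) (insert U0 (avoiding ` N)))"

lemma refines_along_refinement: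
  "\<exists>V. refines_along A U V \<Longrightarrow> refines_along A U (refinement A U)"
  unfolding refinement_def by (simp add: someI_ex)

lemma open_refinement:
  assumes "openin T U" "\<one> \<in> U"
  shows "openin T (refinement A U) \<and> \<one> \<in> refinement A U"
proof (cases "\<exists>V. refines_along A U V")
  case True
  then show ?thesis
    using refines_along_refinement unfolding refines_along_def by blast
qed (use assms in \<open>simp add: refinement_def\<close>)

lemma open_avoiding: "openin T (avoiding A) \<and> \<one> \<in> avoiding A"
  unfolding avoiding_def using openin_topspace[of T]
  by (simp add: someI_ex[of "\<lambda>V. openin T V \<and> \<one> \<in> V \<and> V \<inter> A = {}"])

lemma avoiding_disjoint:
  "\<exists>V. openin T V \<and> \<one> \<in> V \<and> V \<inter> A = {} \<Longrightarrow> avoiding A \<inter> A = {}"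
  unfolding avoiding_def by (simp add: someI_ex[of "\<lambda>V. openin T V \<and> \<one> \<in> V \<and> V \<inter> A = {}"])

lemma exists_refines_along:
  assumes "openin T U" "\<one> \<in> U" "y \<in> carrier G"
  shows "\<exists>A\<in>N. y \<in> A \<and> (\<exists>V. refines_along A U V)"
proof -
  obtain P V where P: "openin T P" "y \<in> P" and V: "openin T V" "\<one> \<in> V"
    and PV: "\<forall>y'\<in>P. \<forall>a\<in>V. inv y' \<otimes> a \<otimes> y' \<in> U \<and> inv a \<in> U \<and> (\<forall>b\<in>V. a \<otimes> b \<in> U)"
    using exists_conj_mult_inv_nhds[OF assms] by blast
  obtain A where A: "A \<in> N" "y \<in> A" "A \<subseteq> P"
    using network P unfolding is_network_def by blast
  have f_one: "f \<one> = \<one>"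
    using f_hom by (simp add: hom_one)
  let ?V = "V \<inter> {a \<in> topspace T. f a \<in> U}"
  have "openin T ?V"
    using V(1) openin_continuous_map_preimage[OF f_continuous assms(1)] by (rule openin_Int)
  moreover have "\<one> \<in> ?V"
    using V(2) assms(2) f_one by simp
  ultimately have "refines_along A U ?V"
    unfolding refines_along_def using PV A(3) by blast
  then show ?thesis using A by blast
qed

lemma refinement_step_mono: "\<F> \<subseteq> refinement_step \<F>"
  unfolding refinement_step_def by blast

lemma open_iterate_refinement_step:
  "U \<in> (refinement_step ^^ n) (insert U0 (avoiding ` N)) \<Longrightarrow> openin T U \<and> \<one> \<in> U"
proof (induction n arbitrary: U)
  case 0
  then show ?case using U0_open one_mem_U0 open_avoiding by auto
next
  case (Suc n)
  then show ?case
    unfolding refinement_step_def using open_refinement by auto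
qed

lemma open_nhds_family: "U \<in> nhds_family \<Longrightarrow> openin T U \<and> \<one> \<in> U"
  unfolding nhds_family_def using open_iterate_refinement_step by blast

lemma nhds_family_closed:
  assumes "U \<in> nhds_family" "V \<in> nhds_family"
  shows "U \<inter> V \<in> nhds_family" and "A \<in> N \<Longrightarrow> refinement A U \<in> nhds_family"
proof -
  let ?F = "\<lambda>n. (refinement_step ^^ n) (insert U0 (avoiding ` N))"
  obtain m n where "U \<in> ?F m" "V \<in> ?F n"
    using assms unfolding nhds_family_def by blast
  moreover have "?F k \<subseteq> ?F (Suc k)" for k
    by (simp add: refinement_step_mono)
  then have mono: "i \<le> j \<Longrightarrow> ?F i \<subseteq> ?F j" for i j
    by (rule lift_Suc_mono_le)
  ultimately have "U \<in> ?F (max m n)" "V \<in> ?F (max m n)"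
    using mono[OF max.cobounded1] mono[OF max.cobounded2] by blast+
  then have "U \<inter> V \<in> ?F (Suc (max m n))" and "A \<in> N \<Longrightarrow> refinement A U \<in> ?F (Suc (max m n))"
    unfolding funpow.simps(2) o_def refinement_step_def by blast+
  then show "U \<inter> V \<in> nhds_family" and "A \<in> N \<Longrightarrow> refinement A U \<in> nhds_family"
    unfolding nhds_family_def by blast+
qed

lemma generators_nhds_family: "insert U0 (avoiding ` N) \<subseteq> nhds_family"
  unfolding nhds_family_def by (metis UN_upper UNIV_I funpow_0)

lemma card_refinement_step:
  assumes "|\<F>| \<le>o |N|"
  shows "|refinement_step \<F>| \<le>o |N|"
proof -
  have inf: "\<not> finite (Field |N| )"
    using infinite_network by (simp add: Field_card_of)
  have "|\<F> \<times> \<F>| \<le>o |N|"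
    using card_of_Sigma_ordLeq_infinite[OF infinite_network assms, of "\<lambda>_. \<F>"] assms by auto
  then have "|(\<lambda>(U, V). U \<inter> V) ` (\<F> \<times> \<F>)| \<le>o |N|"
    using card_of_image ordLeq_transitive by blast
  moreover have "|N \<times> \<F>| \<le>o |N|"
    using card_of_Sigma_ordLeq_infinite[OF infinite_network ordLeq_refl[OF card_of_Card_order],
        of "\<lambda>_. \<F>"] assms
    by auto
  then have "|(\<lambda>(A, U). refinement A U) ` (N \<times> \<F>)| \<le>o |N|"
    using card_of_image ordLeq_transitive by blast
  ultimately show ?thesis
    unfolding refinement_step_def
    by (intro card_of_Un_ordLeq_infinite_Field[OF inf _ _ card_of_Card_order] assms)
qed

lemma card_nhds_family: "|nhds_family| \<le>o |N|"
proof -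
  have inf: "\<not> finite (Field |N| )"
    using infinite_network by (simp add: Field_card_of)
  have "|insert U0 (avoiding ` N)| \<le>o |N|"
    using card_of_Un_ordLeq_infinite_Field[OF inf _ card_of_image card_of_Card_order, of "{U0}"]
      card_of_singl_ordLeq[of N U0] infinite_network by fastforce
  then have "|(refinement_step ^^ n) (insert U0 (avoiding ` N))| \<le>o |N|" for n
    by (induction n) (simp_all add: card_refinement_step)
  moreover have "|UNIV :: nat set| \<le>o |N|"
    using infinite_network infinite_iff_card_of_nat by blast
  ultimately show ?thesis
    unfolding nhds_family_def
    by (intro card_of_UNION_ordLeq_infinite[OF infinite_network]) auto
qed

lemma nhds_family_refinement:
  assumes U: "U \<in> nhds_family" and y: "y \<in> carrier G"
  shows "\<exists>V\<in>nhds_family. \<forall>a\<in>V. inv y \<otimes> a \<otimes> y \<in> U \<and> inv a \<in> U \<and> f a \<in> U \<and> (\<forall>b\<in>V. a \<otimes> b \<in> U)"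
proof -
  obtain A where A: "A \<in> N" "y \<in> A" "\<exists>V. refines_along A U V"
    using exists_refines_along[OF open_nhds_family[OF U, THEN conjunct1]
        open_nhds_family[OF U, THEN conjunct2] y] by blast
  have "refines_along A U (refinement A U)"
    using refines_along_refinement[OF A(3)] .
  then have "\<forall>a\<in>refinement A U. inv y \<otimes> a \<otimes> y \<in> U \<and> inv a \<in> U \<and> f a \<in> U \<and>
      (\<forall>b\<in>refinement A U. a \<otimes> b \<in> U)"
    using A(2) unfolding refines_along_def by blast
  then show ?thesis
    using nhds_family_closed(2)[OF U U A(1)] by blast
qed

sublocale identity_nhds_base G nhds_family
proof
  fix U assume U: "U \<in> nhds_family"
  show "U \<subseteq> carrier G"
    using openin_subset[OF open_nhds_family[OF U, THEN conjunct1]] by simp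
  show "\<one> \<in> U"
    using open_nhds_family[OF U] by blast
  show "\<exists>V\<in>nhds_family. \<forall>a\<in>V. \<forall>b\<in>V. a \<otimes> b \<in> U"
    using nhds_family_refinement[OF U one_closed] by blast
  show "\<exists>V\<in>nhds_family. \<forall>a\<in>V. inv a \<in> U"
    using nhds_family_refinement[OF U one_closed] by blast
  show "\<exists>V\<in>nhds_family. \<forall>a\<in>V. inv y \<otimes> a \<otimes> y \<in> U" if "y \<in> carrier G" for y
    using nhds_family_refinement[OF U that] by blast
next
  show "nhds_family \<noteq> {}"
    using generators_nhds_family by blast
qed (rule nhds_family_closed(1))

lemma nhds_family_separating:
  assumes z: "z \<in> carrier G" "z \<noteq> \<one>"
  shows "\<exists>U\<in>nhds_family. z \<notin> U"
proof -
  obtain P Q where PQ: "openin T P" "openin T Q" "\<one> \<in> P" "z \<in> Q" "disjnt P Q"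
    using Hausdorff z one_closed unfolding Hausdorff_space_def topspace_eq by blast
  obtain A where A: "A \<in> N" "z \<in> A" "A \<subseteq> Q"
    using network PQ(2,4) unfolding is_network_def by blast
  have "\<exists>V. openin T V \<and> \<one> \<in> V \<and> V \<inter> A = {}"
    using PQ(1,3,5) A(3) unfolding disjnt_def by blast
  then have "avoiding A \<inter> A = {}"
    by (rule avoiding_disjoint)
  moreover have "avoiding A \<in> insert U0 (avoiding ` N)"
    using A(1) by blast
  then have "avoiding A \<in> nhds_family"
    using generators_nhds_family by blast
  ultimately show ?thesis
    using A(2) by blast
qed

lemma f_image_nhds_family:
  assumes "U \<in> nhds_family"
  shows "\<exists>V\<in>nhds_family. f ` V \<subseteq> U"
proof -
  obtain V where "V \<in> nhds_family" "\<forall>a\<in>V. f a \<in> U"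
    using nhds_family_refinement[OF assms one_closed] by blast
  then show ?thesis by blast
qed

lemma openin_if_openin_nhds_topology:
  assumes "openin nhds_topology W"
  shows "openin T W"
proof (subst openin_subopen, intro ballI)
  fix x assume x: "x \<in> W"
  then obtain U where U: "U \<in> nhds_family" "x <#\<^bsub>G\<^esub> U \<subseteq> W"
    using assms unfolding openin_nhds_topology by blast
  have xG: "x \<in> carrier G"
    using assms x unfolding openin_nhds_topology by blast
  have "openin T (x <#\<^bsub>G\<^esub> U)"
    using openin_l_coset[OF _ xG] open_nhds_family[OF U(1)] by blast
  then show "\<exists>S. openin T S \<and> x \<in> S \<and> S \<subseteq> W"
    using U(2) mem_l_coset_self[OF xG U(1)] by blast
qed

lemma ex_base_card_le_network: "\<exists>B. is_base nhds_topology B \<and> |B| \<le>o |N|"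
proof -
  obtain D where D: "D \<subseteq> carrier G" "|D| \<le>o |N|"
    and dense: "\<And>S. openin T S \<Longrightarrow> S \<noteq> {} \<Longrightarrow> S \<inter> D \<noteq> {}"
    using ex_dense_subset_card_le_network[OF network] by auto
  let ?B = "(\<lambda>(d, V). nhds_topology interior_of (d <#\<^bsub>G\<^esub> V)) ` (D \<times> nhds_family)"
  have "is_base nhds_topology ?B"
    using D(1) dense[OF openin_if_openin_nhds_topology] by (rule is_base_nhds_topology)
  moreover have "|D \<times> nhds_family| \<le>o |N|"
    using card_of_Sigma_ordLeq_infinite[OF infinite_network D(2), of "\<lambda>_. nhds_family"]
      card_nhds_family by auto
  then have "|?B| \<le>o |N|"
    using card_of_image ordLeq_transitive by blast
  ultimately show ?thesis
    by (intro exI[of _ ?B] conjI)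
qed

lemma not_open_map_nhds_topology:
  assumes "\<not> (\<exists>W. openin T W \<and> \<one> \<in> W \<and> W \<subseteq> f ` U0)"
  shows "\<not> open_map nhds_topology nhds_topology f"
proof
  assume "open_map nhds_topology nhds_topology f"
  then have "openin nhds_topology (f ` (nhds_topology interior_of U0))"
    unfolding open_map_def by (simp add: openin_interior_of)
  then have "openin T (f ` (nhds_topology interior_of U0))"
    by (rule openin_if_openin_nhds_topology)
  moreover have "\<one> \<in> f ` (nhds_topology interior_of U0)"
  proof -
    have U0: "U0 \<in> nhds_family"
      using generators_nhds_family by (simp add: insert_subset)
    have "\<one> \<in> nhds_topology interior_of (\<one> <#\<^bsub>G\<^esub> U0)"
      using mem_interior_l_coset[OF one_closed U0] .
    then have "\<one> \<in> nhds_topology interior_of U0"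
      using lcos_mult_one[OF nhds_subset_carrier[OF U0]] by simp
    moreover have "f \<one> = \<one>"
      using f_hom by (simp add: hom_one)
    ultimately show ?thesis
      by (metis image_eqI)
  qed
  moreover have "f ` (nhds_topology interior_of U0) \<subseteq> f ` U0"
    by (rule image_mono[OF interior_of_subset])
  ultimately show False
    using assms by blast
qed

lemma ex_coarser_non_g_reversible:
  assumes "f \<in> iso G G" "\<not> (\<exists>W. openin T W \<and> \<one> \<in> W \<and> W \<subseteq> f ` U0)"
  shows "\<exists>T' B. hausdorff_group_topology G T' \<and> \<not> g_reversible G T' \<and> is_base T' B \<and> |B| \<le>o |N|"
proof -
  have "hausdorff_group_topology G nhds_topology"
    unfolding hausdorff_group_topology_def
    using topological_group_nhds_topology Hausdorff_nhds_topology[OF nhds_family_separating] by blast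
  moreover have "\<not> g_reversible G nhds_topology"
    unfolding g_reversible_def
    using assms(1) continuous_map_nhds_hom[OF f_hom f_image_nhds_family]
      not_open_map_nhds_topology[OF assms(2)]
    by blast
  moreover obtain B where "is_base nhds_topology B" "|B| \<le>o |N|"
    using ex_base_card_le_network by blast
  ultimately show ?thesis
    by blast
qed

end

theorem theorem6p4:
  fixes G :: "('a, 'b) monoid_scheme" and T :: "'a topology"
  assumes "hausdorff_group_topology G T"
    and "\<not> g_reversible G T"
  shows "\<exists>T'. hausdorff_group_topology G T' \<and> weight_le_netweight T' T
              \<and> \<not> g_reversible G T'"
proof -
  interpret top_group G T
    using assms(1) by unfold_locales (simp add: hausdorff_group_topology_def)
  have Hausdorff: "Hausdorff_space T"
    using assms(1) by (simp add: hausdorff_group_topology_def)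
  obtain f where f: "f \<in> iso G G" "continuous_map T T f" "\<not> open_map T T f"
    using assms(2) unfolding g_reversible_def by blast
  then have f_hom: "f \<in> hom G G" by (simp add: iso_def)
  then obtain U0 where U0: "openin T U0" "\<one>\<^bsub>G\<^esub> \<in> U0"
      "\<not> (\<exists>W. openin T W \<and> \<one>\<^bsub>G\<^esub> \<in> W \<and> W \<subseteq> f ` U0)"
    using open_map_hom_if_open_at_one f(3) by blast
  obtain N where N: "is_network T N" and N_least: "\<And>N'. is_network T N' \<Longrightarrow> |N| \<le>o |N'|"
    using ex_network_of_least_card by blast
  have "infinite N"
  proof
    assume "finite N"
    then have "finite (carrier G)"
      using finite_topspace_if_finite_network[OF Hausdorff_imp_t0_space[OF Hausdorff] N] by simp
    moreover have "f \<in> carrier G \<rightarrow> carrier G"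
      using f_hom by (simp add: hom_def)
    ultimately show False
      using open_map_if_finite[OF Hausdorff] f(3) by blast
  qed
  then interpret network_refinement G T N f U0
    using Hausdorff N f_hom f(2) U0 by unfold_locales auto
  obtain T' B where T': "hausdorff_group_topology G T'" "\<not> g_reversible G T'"
    and B: "is_base T' B" "|B| \<le>o |N|"
    using ex_coarser_non_g_reversible[OF f(1) U0(3)] by blast
  have "|B| \<le>o |N'|" if "is_network T N'" for N'
    using B(2) N_least[OF that] by (rule ordLeq_transitive)
  then have "weight_le_netweight T' T"
    unfolding weight_le_netweight_def using B(1) by blast
  then show ?thesis
    using T' by blast
qed

end
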